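(* Let $X$ be a sufficiently large real number, $P=\lfloor 5X\rfloor$, and $f(\alpha)=\sum_{1\le m\le X}e(m^2\alpha)$. For integers $q\ge1$, $a$, $n$ let $S(q,a,n)=\sum_{x=1}^q e\big(\frac{ax^2+nx}{q}\big)$ and $S(q,a)=S(q,a,0)$. Suppose that $(a,q)=1$, $q\le P$ and $|\beta|\le \frac{1}{qP}$. Then there are complex numbers $E(b,q,\beta)$ (for integers $-3q/2<b\le 3q/2$, not depending on $a$) such that $$f\Big(\frac{a}{q}+\beta\Big)=\frac{S(q,a)}{q}\int_0^Xe(x^2\beta)\,dx+\sum_{-3q/2<b\le 3q/2}S(q,a,b)E(b,q,\beta)$$ and $$\sum_{-3q/2<b\le 3q/2}|E(b,q,\beta)|\ll \log (q+2),$$ with an absolute implied constant.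
   Context: $e(z)=e^{2\pi i z}$; $\lfloor x\rfloor$ is the greatest integer not exceeding $x$. *)

theory Defs
  imports "HOL-Analysis.Analysis"
begin

definition e :: "real \<Rightarrow> complex" where
  "e z = exp (2 * complex_of_real pi * \<i> * complex_of_real z)"

definition weylf :: "real \<Rightarrow> real \<Rightarrow> complex" where
  "weylf X \<alpha> = (\<Sum>m\<in>{1..\<lfloor>X\<rfloor>}. e (of_int (m^2) * \<alpha>))"

definition S :: "int \<Rightarrow> int \<Rightarrow> int \<Rightarrow> complex" where
  "S q a n = (\<Sum>x\<in>{1..q}. e (of_int (a * x^2 + n * x) / of_int q))"

definition brange :: "int \<Rightarrow> int set" where
  "brange q = {b. - 3 * q < 2 * b \<and> 2 * b \<le> 3 * q}"

end

theory Submission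
  imports Defs
begin

text \<open>
  Expanding \<open>m \<mapsto> e(a m\<^sup>2/q)\<close> in the characters \<open>e(-b m/q)\<close>, whose coefficients are the
  Gauss sums \<open>S(q,a,b)/q\<close>, writes \<open>f(a/q + \<beta>)\<close> as \<open>\<Sum>\<^sub>b S(q,a,b) T\<^sub>b/q\<close> with twisted sums
  \<open>T\<^sub>b = \<Sum>\<^sub>m e(\<beta> m\<^sup>2 - b m/q)\<close> that do not involve \<open>a\<close>.
  Since \<open>|\<beta>| \<le> 1/(qP)\<close> and \<open>m \<le> \<lfloor>X\<rfloor> \<le> P/4\<close>, the phase increments \<open>\<beta>(2m+1) - b/q\<close> vary
  monotonically and keep distance at least \<open>min(b, q-b)/(2q)\<close> from the integers, so the
  Kusmin-Landau inequality bounds \<open>T\<^sub>b\<close> by \<open>O(q/min(b, q-b))\<close> for \<open>0 < b < q\<close>.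
  For \<open>b = 0\<close> the same partial summation, run against \<open>cot x - 1/x\<close> instead of \<open>cot x\<close>,
  shows that \<open>T\<^sub>0\<close> differs from \<open>\<integral>\<^sub>0\<^sup>X e(\<beta> x\<^sup>2) dx\<close> by \<open>O(1)\<close>.
  Summing \<open>1/min(b, q-b)\<close> over \<open>b\<close> produces the logarithm.
\<close>

section \<open>The additive character\<close>

lemma e_conv_cis: "e t = cis (2 * pi * t)"
  by (simp add: e_def cis_conv_exp ac_simps)

lemma e_add: "e (x + y) = e x * e y"
  by (simp add: e_conv_cis distrib_left flip: cis_mult)

lemma norm_e [simp]: "norm (e t) = 1"
  by (simp add: e_conv_cis)

lemma e_eq_1_iff: "e t = 1 \<longleftrightarrow> t \<in> \<int>"
proof -
  have "e t = 1 \<longleftrightarrow> (\<exists>n::int. 2 * pi * t = of_int (2 * n) * pi)"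
    by (simp add: e_def exp_eq_1 ac_simps)
  also have "\<dots> \<longleftrightarrow> (\<exists>n::int. t = of_int n)"
    by (simp add: algebra_simps)
  finally show ?thesis by (auto elim: Ints_cases)
qed

lemma e_of_int [simp]: "e (of_int n) = 1"
  by (simp add: e_eq_1_iff)

lemma e_zero [simp]: "e 0 = 1"
  using e_of_int[of 0] by simp

lemma e_add_of_int: "e (t + of_int n) = e t"
  by (simp add: e_add)

lemma e_of_nat_mult: "e (of_nat n * t) = e t ^ n"
  by (simp add: e_conv_cis Complex.DeMoivre ac_simps)

lemma norm_e_minus_1_le: "norm (e t - 1) \<le> 2 * pi * \<bar>t\<bar>"
proof -
  have "e t = exp (\<i> * of_real (2 * pi * t))"
    by (simp add: e_def ac_simps)
  then have "norm (e t - 1) = 2 * \<bar>sin (2 * pi * t / 2)\<bar>"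
    by (simp only: dist_exp_i_1)
  also have "\<dots> \<le> 2 * \<bar>2 * pi * t / 2\<bar>"
    using abs_sin_x_le_abs_x by simp
  finally show ?thesis by (simp add: abs_mult)
qed

lemma continuous_on_e [continuous_intros]:
  "continuous_on U f \<Longrightarrow> continuous_on U (\<lambda>x. e (f x))"
  unfolding e_def by (intro continuous_intros)

lemma e_div_eq_1_iff:
  fixes q k :: int assumes "q \<noteq> 0"
  shows "e (of_int k / of_int q) = 1 \<longleftrightarrow> q dvd k"
proof -
  have "of_int k / of_int q \<in> (\<int> :: real set) \<longleftrightarrow> (\<exists>t. of_int k / of_int q = (of_int t :: real))"
    by (auto elim: Ints_cases)
  also have "\<dots> \<longleftrightarrow> (\<exists>t. k = q * t)"
    using assms by (simp add: field_simps mult.commute flip: of_int_mult)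
  finally show ?thesis by (simp add: e_eq_1_iff dvd_def)
qed

lemma e_div_cong:
  fixes q u v :: int assumes "q \<noteq> 0" "q dvd u - v"
  shows "e (of_int u / of_int q) = e (of_int v / of_int q)"
proof -
  obtain t where "u = v + q * t" using assms(2) by (auto simp: dvd_def algebra_simps)
  with assms(1) have "of_int u / of_int q = of_int v / of_int q + (of_int t :: real)"
    by (simp add: field_simps)
  then show ?thesis by (simp add: e_add_of_int)
qed

lemma sum_e_multiples:
  fixes q k :: int assumes q: "q \<ge> 1"
  shows "(\<Sum>b\<in>{0..<q}. e (of_int (b * k) / of_int q)) = (if q dvd k then of_int q else 0)"
proof -
  define z where "z = e (of_int k / of_int q)"
  have "(\<Sum>b\<in>{0..<q}. e (of_int (b * k) / of_int q)) = (\<Sum>j<nat q. e (real j * (of_int k / of_int q)))"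
  proof -
    have "{0..<q} = int ` {..<nat q}"
      using q by (simp add: image_int_atLeastLessThan lessThan_atLeast0)
    then show ?thesis by (simp add: sum.reindex)
  qed
  also have "\<dots> = (\<Sum>j<nat q. z ^ j)"
    by (simp only: z_def e_of_nat_mult)
  finally have "(\<Sum>b\<in>{0..<q}. e (of_int (b * k) / of_int q)) = (\<Sum>j<nat q. z ^ j)" .
  moreover have "z ^ nat q = 1"
    using q by (simp add: z_def flip: e_of_nat_mult)
  moreover have "z = 1 \<longleftrightarrow> q dvd k"
    using q by (simp add: z_def e_div_eq_1_iff)
  ultimately show ?thesis
    using q by (simp add: sum_gp_strict)
qed

section \<open>Gauss sums and the expansion of the Weyl sum\<close>

lemma dvd_diff_iff_eq_mod_succ:
  fixes q m x :: int assumes "x \<in> {1..q}"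
  shows "q dvd x - m \<longleftrightarrow> x = (m - 1) mod q + 1"
proof -
  have "q dvd x - m \<longleftrightarrow> (x - 1) mod q = (m - 1) mod q"
    by (simp add: mod_eq_dvd_iff)
  also have "(x - 1) mod q = x - 1"
    using assms by simp
  finally show ?thesis by auto
qed

lemma gauss_sum_fourier_inversion:
  fixes q a m :: int assumes q: "q \<ge> 1"
  shows "(\<Sum>b\<in>{0..<q}. S q a b * e (- of_int (b * m) / of_int q))
           = of_int q * e (of_int (a * m\<^sup>2) / of_int q)"
proof -
  define x0 where "x0 = (m - 1) mod q + 1"
  have "0 \<le> (m - 1) mod q" "(m - 1) mod q < q"
    using q by simp_all
  then have x0: "x0 \<in> {1..q}"
    unfolding x0_def atLeastAtMost_iff by linarith
  have "(\<Sum>b\<in>{0..<q}. S q a b * e (- of_int (b * m) / of_int q))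
      = (\<Sum>x\<in>{1..q}. e (of_int (a * x\<^sup>2) / of_int q)
                      * (\<Sum>b\<in>{0..<q}. e (of_int (b * (x - m)) / of_int q)))"
    unfolding S_def sum_distrib_right sum_distrib_left
    by (subst sum.swap, intro sum.cong refl)
       (simp add: add_divide_distrib diff_divide_distrib algebra_simps flip: e_add)
  also have "\<dots> = (\<Sum>x\<in>{1..q}. if x = x0 then of_int q * e (of_int (a * x0\<^sup>2) / of_int q) else 0)"
  proof (intro sum.cong refl)
    fix x assume x: "x \<in> {1..q}"
    have "(\<Sum>b\<in>{0..<q}. e (of_int (b * (x - m)) / of_int q)) = (if x = x0 then of_int q else 0)"
      using sum_e_multiples[OF q, of "x - m"] dvd_diff_iff_eq_mod_succ[OF x, of m]
      by (simp only: x0_def)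
    then show "e (of_int (a * x\<^sup>2) / of_int q) * (\<Sum>b\<in>{0..<q}. e (of_int (b * (x - m)) / of_int q))
        = (if x = x0 then of_int q * e (of_int (a * x0\<^sup>2) / of_int q) else 0)"
      by simp
  qed
  also have "\<dots> = of_int q * e (of_int (a * x0\<^sup>2) / of_int q)"
    using x0 by simp
  also have "e (of_int (a * x0\<^sup>2) / of_int q) = e (of_int (a * m\<^sup>2) / of_int q)"
  proof (rule e_div_cong)
    have "q dvd x0 - m"
      using dvd_diff_iff_eq_mod_succ[OF x0, of m] by (simp add: x0_def)
    then show "q dvd a * x0\<^sup>2 - a * m\<^sup>2"
      by (simp add: power2_eq_square square_diff_square_factored flip: right_diff_distrib)
  qed (use q in simp)
  finally show ?thesis .
qed

lemma weylf_eq_sum_gauss_sums: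
  fixes q a :: int assumes q: "q \<ge> 1" and X: "0 \<le> X"
  shows "weylf X (of_int a / of_int q + \<beta>) =
    (\<Sum>b\<in>{0..<q}. S q a b * (\<Sum>m=1..nat \<lfloor>X\<rfloor>. e (\<beta> * (real m)\<^sup>2 - of_int b * real m / of_int q)))
      / of_int q"
proof -
  have "{1..\<lfloor>X\<rfloor>} = int ` {1..nat \<lfloor>X\<rfloor>}"
    using X by (simp add: image_int_atLeastAtMost)
  then have "weylf X (of_int a / of_int q + \<beta>)
      = (\<Sum>m=1..nat \<lfloor>X\<rfloor>. e (of_int (a * (int m)\<^sup>2) / of_int q) * e (\<beta> * (real m)\<^sup>2))"
    by (simp add: weylf_def sum.reindex algebra_simps flip: e_add)
  also have "\<dots> = (\<Sum>m=1..nat \<lfloor>X\<rfloor>. (\<Sum>b\<in>{0..<q}. S q a b * e (- of_int (b * int m) / of_int q))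
                                        * e (\<beta> * (real m)\<^sup>2) / of_int q)"
    by (intro sum.cong refl) (use q in \<open>simp only: gauss_sum_fourier_inversion, simp\<close>)
  also have "\<dots> = (\<Sum>b\<in>{0..<q}. S q a b * (\<Sum>m=1..nat \<lfloor>X\<rfloor>. e (\<beta> * (real m)\<^sup>2 - of_int b * real m / of_int q)))
                     / of_int q"
  proof -
    have "e (- (of_int b * real m / of_int q)) * e (\<beta> * (real m)\<^sup>2)
          = e (\<beta> * (real m)\<^sup>2 - of_int b * real m / of_int q)" for b :: int and m :: nat
      by (simp add: ac_simps flip: e_add)
    then show ?thesis
      unfolding sum_divide_distrib sum_distrib_left sum_distrib_right
      by (subst sum.swap) (simp add: mult.assoc)
  qed
  finally show ?thesis .
qed

section \<open>Partial summation against cotangents\<close>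

lemma sum_diff_mult_by_parts:
  fixes h c :: "nat \<Rightarrow> 'a :: comm_ring"
  shows "(\<Sum>m<Suc n. (h (Suc m) - h m) * c m) =
           h (Suc n) * c n - h 0 * c 0 - (\<Sum>m=1..n. h m * (c m - c (m - 1)))"
  by (induction n) (simp_all add: algebra_simps)

lemma norm_sum_diff_mult_le:
  fixes h c :: "nat \<Rightarrow> 'a :: real_normed_field"
  assumes h: "\<And>m. m \<le> Suc n \<Longrightarrow> norm (h m) \<le> 1"
  shows "norm (\<Sum>m<Suc n. (h (Suc m) - h m) * c m)
           \<le> norm (c n) + norm (c 0) + (\<Sum>m=1..n. norm (c m - c (m - 1)))"
proof -
  have "norm (h (Suc n) * c n) \<le> norm (c n)" "norm (h 0 * c 0) \<le> norm (c 0)"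
    using h[of "Suc n"] h[of 0] by (auto simp: norm_mult intro: mult_left_le_one_le)
  moreover have "norm (\<Sum>m=1..n. h m * (c m - c (m - 1))) \<le> (\<Sum>m=1..n. norm (c m - c (m - 1)))"
    using h by (intro sum_norm_le) (auto simp: norm_mult intro: mult_left_le_one_le)
  ultimately show ?thesis
    unfolding sum_diff_mult_by_parts by (smt (verit) norm_triangle_ineq4)
qed

lemma sum_abs_diff_incseq:
  fixes r :: "nat \<Rightarrow> real"
  assumes "\<forall>m<n. r m \<le> r (Suc m)"
  shows "(\<Sum>m=1..n. \<bar>r m - r (m - 1)\<bar>) = r n - r 0"
  using assms by (induction n) auto

lemma sum_abs_diff_monotone:
  fixes r :: "nat \<Rightarrow> real"
  assumes "(\<forall>m<n. r m \<le> r (Suc m)) \<or> (\<forall>m<n. r (Suc m) \<le> r m)"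
  shows "(\<Sum>m=1..n. \<bar>r m - r (m - 1)\<bar>) = \<bar>r n - r 0\<bar>"
proof -
  have "(\<Sum>m=1..n. \<bar>r m - r (m - 1)\<bar>) = r n - r 0 \<or> (\<Sum>m=1..n. \<bar>r m - r (m - 1)\<bar>) = r 0 - r n"
    using assms
  proof
    assume "\<forall>m<n. r (Suc m) \<le> r m"
    then have "(\<Sum>m=1..n. \<bar>(- r) m - (- r) (m - 1)\<bar>) = (- r) n - (- r) 0"
      by (intro sum_abs_diff_incseq) auto
    then show ?thesis
      by (simp add: abs_minus_commute)
  qed (use sum_abs_diff_incseq in blast)
  moreover have "0 \<le> (\<Sum>m=1..n. \<bar>r m - r (m - 1)\<bar>)"
    by (intro sum_nonneg) simp
  ultimately show ?thesis
    by linarith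
qed

lemma norm_sum_diff_mult_monotone_le:
  fixes h :: "nat \<Rightarrow> complex" and r :: "nat \<Rightarrow> real"
  assumes h: "\<And>m. m \<le> n \<Longrightarrow> norm (h m) \<le> 1"
    and r: "\<And>m. m < n \<Longrightarrow> \<bar>r m\<bar> \<le> K" and K: "0 \<le> K"
    and mono: "(\<forall>m. Suc m < n \<longrightarrow> r m \<le> r (Suc m)) \<or> (\<forall>m. Suc m < n \<longrightarrow> r (Suc m) \<le> r m)"
  shows "norm (\<Sum>m<n. (h (Suc m) - h m) * (- 1/2 - \<i>/2 * of_real (r m))) \<le> 1 + 2 * K"
proof (cases n)
  case (Suc k)
  define c where "c m = - 1/2 - \<i>/2 * of_real (r m)" for m
  have norm_c: "norm (c m) \<le> 1/2 + K/2" if "m \<le> k" for m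
  proof -
    have "norm (c m) \<le> norm (- 1/2 :: complex) + norm (\<i>/2 * of_real (r m))"
      unfolding c_def by (rule norm_triangle_ineq4)
    also have "\<dots> \<le> 1/2 + K/2"
      using r[of m] that Suc by (simp add: norm_mult)
    finally show ?thesis .
  qed
  have norm_diff_c: "norm (c m - c (m - 1)) = \<bar>r m - r (m - 1)\<bar> / 2" for m
  proof -
    have "c m - c (m - 1) = - \<i>/2 * of_real (r m - r (m - 1))"
      by (simp add: c_def algebra_simps)
    then show ?thesis
      by (simp add: norm_mult del: of_real_diff)
  qed
  have "(\<Sum>m=1..k. norm (c m - c (m - 1))) = (\<Sum>m=1..k. \<bar>r m - r (m - 1)\<bar>) / 2"
    by (simp only: norm_diff_c sum_divide_distrib)
  also have "\<dots> = \<bar>r k - r 0\<bar> / 2"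
    using mono Suc by (subst sum_abs_diff_monotone) auto
  also have "\<dots> \<le> K"
    using r[of k] r[of 0] Suc by simp
  finally have "(\<Sum>m=1..k. norm (c m - c (m - 1))) \<le> K" .
  moreover have "norm (\<Sum>m<Suc k. (h (Suc m) - h m) * c m)
      \<le> norm (c k) + norm (c 0) + (\<Sum>m=1..k. norm (c m - c (m - 1)))"
    using h Suc by (intro norm_sum_diff_mult_le) simp
  ultimately show ?thesis
    using norm_c[of k] norm_c[of 0] Suc by (simp add: c_def)
qed (use K in simp)

lemma inverse_e_minus_1:
  assumes "sin (pi * t) \<noteq> 0"
  shows "inverse (e t - 1) = - 1/2 - \<i>/2 * of_real (cot (pi * t))"
proof (rule inverse_unique)
  define x where "x = pi * t"
  have et: "e t = Complex (cos (2 * x)) (sin (2 * x))"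
    by (simp add: e_conv_cis x_def cis.ctr ac_simps)
  have "sin x \<noteq> 0"
    using assms by (simp add: x_def)
  then show "(e t - 1) * (- 1/2 - \<i>/2 * of_real (cot (pi * t))) = 1"
    unfolding et x_def[symmetric] cos_double sin_double cot_def
    by (simp add: complex_eq_iff field_simps power2_eq_square)
       (use sin_cos_squared_add3[of x] in algebra)
qed

lemma partial_summation_step_cot:
  assumes "h (Suc m) = h m * e \<theta>" "sin (pi * \<theta>) \<noteq> 0"
  shows "h m = (h (Suc m) - h m) * (- 1/2 - \<i>/2 * of_real (cot (pi * \<theta>)))"
proof -
  have "e \<theta> \<noteq> 1"
  proof
    assume "e \<theta> = 1"
    then obtain k where "\<theta> = of_int k"
      by (auto simp: e_eq_1_iff elim: Ints_cases)
    then show False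
      using assms(2) by (simp add: sin_zero_iff_int2)
  qed
  then have "h m = (h (Suc m) - h m) * inverse (e \<theta> - 1)"
    using assms(1) by (simp add: field_simps)
  then show ?thesis
    using assms(2) by (simp add: inverse_e_minus_1)
qed

lemma partial_summation_step_cot_minus_inverse:
  assumes "h (Suc m) = h m * e \<theta>" "sin (pi * \<theta>) \<noteq> 0" "\<theta> \<noteq> 0"
  shows "h m - (h (Suc m) - h m) / (2 * of_real pi * \<i> * of_real \<theta>)
           = (h (Suc m) - h m) * (- 1/2 - \<i>/2 * of_real (cot (pi * \<theta>) - 1 / (pi * \<theta>)))"
proof -
  define A where "A = h (Suc m) - h m"
  define W where "W = A * \<i> / (2 * of_real (pi * \<theta>))"
  have nonzero: "complex_of_real (pi * \<theta>) \<noteq> 0"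
    using assms(3) by simp
  have "h m - A / (2 * of_real pi * \<i> * of_real \<theta>) = h m + W"
    using nonzero by (simp add: W_def field_simps)
  also have "\<dots> = A * (- 1/2 - \<i>/2 * of_real (cot (pi * \<theta>))) + W"
    using partial_summation_step_cot[OF assms(1,2)]
    unfolding A_def by (rule arg_cong[where f = "\<lambda>x. x + W"])
  also have "\<dots> = A * (- 1/2 - \<i>/2 * of_real (cot (pi * \<theta>) - 1 / (pi * \<theta>)))"
    using nonzero by (simp add: W_def field_simps)
  finally show ?thesis
    unfolding A_def .
qed

lemma cot_antimono:
  assumes "0 < sin x * sin y" "x \<le> y" "y - x \<le> pi"
  shows "cot y \<le> cot x"
proof -
  have "sin x \<noteq> 0" "sin y \<noteq> 0"
    using assms(1) by auto
  then have "cot x - cot y = sin (y - x) / (sin x * sin y)"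
    by (simp add: cot_def sin_diff field_simps)
  moreover have "0 \<le> sin (y - x)"
    using assms by (intro sin_ge_zero) auto
  ultimately have "0 \<le> cot x - cot y"
    using assms(1) by (simp add: divide_nonneg_pos)
  then show ?thesis by simp
qed

lemma x_mult_cos_le_sin:
  assumes "0 \<le> x" "x \<le> pi"
  shows "x * cos x \<le> sin x"
proof -
  have "sin 0 - 0 * cos 0 \<le> sin x - x * cos x"
  proof (rule DERIV_nonneg_imp_increasing_open[OF assms(1)])
    fix t assume t: "0 < t" "t < x"
    have "DERIV (\<lambda>t. sin t - t * cos t) t :> t * sin t"
      by (auto intro!: derivative_eq_intros)
    moreover have "0 \<le> t * sin t"
      using t assms by (simp add: sin_ge_zero)
    ultimately show "\<exists>y. DERIV (\<lambda>t. sin t - t * cos t) t :> y \<and> 0 \<le> y"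
      by blast
  qed (intro continuous_intros)
  then show ?thesis by simp
qed

lemma cot_le_inverse:
  assumes "0 < x" "x < pi"
  shows "cot x \<le> 1 / x"
  using x_mult_cos_le_sin[of x] sin_gt_zero[of x] assms by (simp add: cot_def field_simps)

lemma abs_cot_le:
  assumes "0 < x" "x < pi"
  shows "\<bar>cot x\<bar> \<le> 1 / min x (pi - x)"
proof -
  have "cot x \<le> 1 / x" "- cot x \<le> 1 / (pi - x)"
    using cot_le_inverse[of x] cot_le_inverse[of "pi - x"] assms by (simp_all add: cot_def)
  moreover have "1 / x \<le> 1 / min x (pi - x)" "1 / (pi - x) \<le> 1 / min x (pi - x)"
    using assms by (simp_all add: frac_le)
  ultimately show ?thesis
    by linarith
qed

lemma cot_minus_inverse_antimono:
  assumes "0 < x" "x \<le> y" "y < pi"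
  shows "cot y - 1 / y \<le> cot x - 1 / x"
proof (rule DERIV_nonpos_imp_decreasing_open[OF assms(2)])
  fix t assume t: "x < t" "t < y"
  then have "0 < t" "0 < sin t"
    using assms by (auto intro: sin_gt_zero)
  then have "DERIV (\<lambda>t. cot t - 1 / t) t :> - inverse ((sin t)\<^sup>2) - - inverse (t\<^sup>2)"
    by (intro DERIV_diff DERIV_cot) (auto intro!: derivative_eq_intros simp: power2_eq_square field_simps)
  moreover have "(sin t)\<^sup>2 \<le> t\<^sup>2"
    using abs_sin_x_le_abs_x[of t] by (metis abs_ge_zero power2_abs power_mono)
  then have "- inverse ((sin t)\<^sup>2) - - inverse (t\<^sup>2) \<le> 0"
    using \<open>0 < sin t\<close> by (simp add: le_imp_inverse_le)
  ultimately show "\<exists>z. DERIV (\<lambda>t. cot t - 1 / t) t :> z \<and> z \<le> 0"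
    by blast
next
  have "sin t \<noteq> 0 \<and> t \<noteq> 0" if "t \<in> {x..y}" for t
    using that assms sin_gt_zero[of t] by auto
  then show "continuous_on {x..y} (\<lambda>t. cot t - 1 / t)"
    unfolding cot_def using assms by (auto intro!: continuous_intros)
qed

lemma abs_cot_minus_inverse_le_1:
  assumes "x \<noteq> 0" "\<bar>x\<bar> \<le> pi / 2"
  shows "\<bar>cot x - 1 / x\<bar> \<le> 1"
proof -
  have pos: "\<bar>cot y - 1 / y\<bar> \<le> 1" if "0 < y" "y \<le> pi / 2" for y
  proof -
    have "cot (pi / 2) - 1 / (pi / 2) \<le> cot y - 1 / y"
      using that by (intro cot_minus_inverse_antimono) auto
    moreover have "cot (pi / 2) - 1 / (pi / 2) = - (2 / pi)"
      by (simp add: cot_def)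
    moreover have "2 / pi \<le> 1"
      using pi_gt3 by simp
    moreover have "cot y \<le> 1 / y"
      using that by (intro cot_le_inverse) auto
    ultimately show ?thesis
      by linarith
  qed
  show ?thesis
    using pos[of x] pos[of "- x"] assms by (cases "0 < x") (auto simp: cot_def)
qed

lemma cot_minus_inverse_antimono_same_sign:
  assumes "0 < x * y" "x \<le> y" "\<bar>y\<bar> < pi" "\<bar>x\<bar> < pi"
  shows "cot y - 1 / y \<le> cot x - 1 / x"
proof (cases "0 < x")
  case True
  then show ?thesis
    using assms by (intro cot_minus_inverse_antimono) auto
next
  case False
  then have "cot (- x) - 1 / (- x) \<le> cot (- y) - 1 / (- y)"
    using assms by (intro cot_minus_inverse_antimono) (auto simp: zero_less_mult_iff)
  then show ?thesis
    by simp
qed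

lemma cot_pi_antimono:
  assumes "0 < \<theta>" "\<theta> \<le> \<theta>'" "\<theta>' < 1"
  shows "cot (pi * \<theta>') \<le> cot (pi * \<theta>)"
proof (rule cot_antimono)
  show "0 < sin (pi * \<theta>) * sin (pi * \<theta>')"
    using assms by (intro mult_pos_pos sin_gt_zero) auto
  have "pi * (\<theta>' - \<theta>) \<le> pi * 1"
    using assms by (intro mult_left_mono) auto
  then show "pi * \<theta>' - pi * \<theta> \<le> pi"
    by (simp add: algebra_simps)
qed (use assms in auto)

lemma abs_cot_pi_le:
  assumes "0 < \<delta>" "\<delta> \<le> \<theta>" "\<theta> \<le> 1 - \<delta>"
  shows "\<bar>cot (pi * \<theta>)\<bar> \<le> 1 / (pi * \<delta>)"
proof -
  have "\<bar>cot (pi * \<theta>)\<bar> \<le> 1 / min (pi * \<theta>) (pi - pi * \<theta>)"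
    using assms by (intro abs_cot_le) auto
  also have "\<dots> \<le> 1 / (pi * \<delta>)"
  proof (intro divide_left_mono)
    have "pi * \<delta> \<le> pi * \<theta>" "pi * \<delta> \<le> pi * (1 - \<theta>)"
      using assms by (intro mult_left_mono; simp)+
    then show "pi * \<delta> \<le> min (pi * \<theta>) (pi - pi * \<theta>)"
      by (simp add: algebra_simps)
  qed (use assms in auto)
  finally show ?thesis .
qed

text \<open>Each term is a difference times \<open>1/(e(\<theta>) - 1) = -1/2 - i cot(\<pi>\<theta>)/2\<close>, and the cotangents
  are bounded and monotone, so partial summation only costs their total variation.\<close>

lemma kusmin_landau:
  fixes g \<theta> :: "nat \<Rightarrow> real"
  assumes step: "\<And>m. m < n \<Longrightarrow> e (g (Suc m) - g m) = e (\<theta> m)"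
    and range: "\<And>m. m < n \<Longrightarrow> \<delta> \<le> \<theta> m \<and> \<theta> m \<le> 1 - \<delta>" and \<delta>: "0 < \<delta>"
    and mono: "(\<forall>m. Suc m < n \<longrightarrow> \<theta> m \<le> \<theta> (Suc m)) \<or> (\<forall>m. Suc m < n \<longrightarrow> \<theta> (Suc m) \<le> \<theta> m)"
  shows "norm (\<Sum>m<n. e (g m)) \<le> 1 + 2 / (pi * \<delta>)"
proof -
  define r where "r m = cot (pi * \<theta> m)" for m
  have "e (g m) = (e (g (Suc m)) - e (g m)) * (- 1/2 - \<i>/2 * of_real (r m))" if "m < n" for m
  proof (unfold r_def, rule partial_summation_step_cot)
    have "e (g (Suc m)) = e (g m) * e (g (Suc m) - g m)"
      by (simp flip: e_add)
    then show "e (g (Suc m)) = e (g m) * e (\<theta> m)"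
      using step[OF that] by simp
    show "sin (pi * \<theta> m) \<noteq> 0"
      using range[OF that] \<delta> by (intro less_imp_neq[symmetric] sin_gt_zero) auto
  qed
  then have "(\<Sum>m<n. e (g m)) = (\<Sum>m<n. (e (g (Suc m)) - e (g m)) * (- 1/2 - \<i>/2 * of_real (r m)))"
    by simp
  also have "norm \<dots> \<le> 1 + 2 * (1 / (pi * \<delta>))"
  proof (rule norm_sum_diff_mult_monotone_le)
    show "\<bar>r m\<bar> \<le> 1 / (pi * \<delta>)" if "m < n" for m
      unfolding r_def using range[OF that] \<delta> by (intro abs_cot_pi_le) auto
    have r_antimono: "r k \<le> r j" if "j < n" "k < n" "\<theta> j \<le> \<theta> k" for j k
      unfolding r_def using range[OF that(1)] range[OF that(2)] that(3) \<delta>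
      by (intro cot_pi_antimono) auto
    show "(\<forall>m. Suc m < n \<longrightarrow> r m \<le> r (Suc m)) \<or> (\<forall>m. Suc m < n \<longrightarrow> r (Suc m) \<le> r m)"
      using mono r_antimono by (metis Suc_lessD)
  qed (use \<delta> in auto)
  finally show ?thesis
    by simp
qed

text \<open>Dividing the differences by \<open>2\<pi>i\<theta>\<close> instead of \<open>e(\<theta>) - 1\<close> removes the pole of \<open>cot(\<pi>\<theta>)\<close>
  at \<open>\<theta> = 0\<close>; the remaining coefficients \<open>cot x - 1/x\<close> are bounded by \<open>1\<close> on \<open>|x| \<le> \<pi>/2\<close>.\<close>

lemma norm_sum_e_minus_differences_le:
  fixes g \<theta> :: "nat \<Rightarrow> real"
  assumes step: "\<And>m. m < n \<Longrightarrow> e (g (Suc m) - g m) = e (\<theta> m)"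
    and small: "\<And>m. m < n \<Longrightarrow> \<bar>\<theta> m\<bar> \<le> 1 / 2"
    and same_sign: "\<And>j k. j < n \<Longrightarrow> k < n \<Longrightarrow> 0 < \<theta> j * \<theta> k"
    and mono: "(\<forall>m. Suc m < n \<longrightarrow> \<theta> m \<le> \<theta> (Suc m)) \<or> (\<forall>m. Suc m < n \<longrightarrow> \<theta> (Suc m) \<le> \<theta> m)"
  shows "norm ((\<Sum>m<n. e (g m)) -
           (\<Sum>m<n. (e (g (Suc m)) - e (g m)) / (2 * of_real pi * \<i> * of_real (\<theta> m)))) \<le> 3"
proof -
  define r where "r m = cot (pi * \<theta> m) - 1 / (pi * \<theta> m)" for m
  have nonzero: "\<theta> m \<noteq> 0" if "m < n" for m
    using same_sign[OF that that] by auto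
  have angle: "\<bar>pi * \<theta> m\<bar> \<le> pi / 2" if "m < n" for m
    using mult_left_mono[OF small[OF that] pi_ge_zero] by (simp add: abs_mult)
  have "e (g m) - (e (g (Suc m)) - e (g m)) / (2 * of_real pi * \<i> * of_real (\<theta> m))
      = (e (g (Suc m)) - e (g m)) * (- 1/2 - \<i>/2 * of_real (r m))" if "m < n" for m
    unfolding r_def
  proof (rule partial_summation_step_cot_minus_inverse)
    have "e (g (Suc m)) = e (g m) * e (g (Suc m) - g m)"
      by (simp flip: e_add)
    then show "e (g (Suc m)) = e (g m) * e (\<theta> m)"
      using step[OF that] by simp
    show "sin (pi * \<theta> m) \<noteq> 0"
      using angle[OF that] nonzero[OF that] pi_gt_zero by (subst sin_zero_pi_iff) (auto simp: abs_if)
  qed (use nonzero[OF that] in simp)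
  then have "(\<Sum>m<n. e (g m)) - (\<Sum>m<n. (e (g (Suc m)) - e (g m)) / (2 * of_real pi * \<i> * of_real (\<theta> m)))
      = (\<Sum>m<n. (e (g (Suc m)) - e (g m)) * (- 1/2 - \<i>/2 * of_real (r m)))"
    by (simp flip: sum_subtractf)
  also have "norm \<dots> \<le> 1 + 2 * 1"
  proof (rule norm_sum_diff_mult_monotone_le)
    show "\<bar>r m\<bar> \<le> 1" if "m < n" for m
      unfolding r_def using angle[OF that] nonzero[OF that] by (intro abs_cot_minus_inverse_le_1) auto
    have "\<bar>pi * \<theta> m\<bar> < pi" if "m < n" for m
      using angle[OF that] pi_gt_zero by linarith
    then have r_antimono: "r k \<le> r j" if "j < n" "k < n" "\<theta> j \<le> \<theta> k" for j k
      unfolding r_def using that same_sign[of j k]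
      by (intro cot_minus_inverse_antimono_same_sign) (auto simp: mult_pos_pos ac_simps)
    show "(\<forall>m. Suc m < n \<longrightarrow> r m \<le> r (Suc m)) \<or> (\<forall>m. Suc m < n \<longrightarrow> r (Suc m) \<le> r m)"
      using mono r_antimono by (metis Suc_lessD)
  qed auto
  finally show ?thesis
    by simp
qed

section \<open>Quadratic exponential sums\<close>

lemma norm_sum_e_quadratic_twist_le:
  fixes q b :: int and \<beta> :: real and N :: nat
  assumes b: "1 \<le> b" "b < q" and small: "4 * of_int q * real N * \<bar>\<beta>\<bar> \<le> 1"
  shows "norm (\<Sum>m<N. e (\<beta> * (real m)\<^sup>2 - of_int b * real m / of_int q))
           \<le> 1 + 2 * of_int q / of_int (min b (q - b))"
proof -
  define Q B M where "Q = real_of_int q" and "B = real_of_int b" and "M = real_of_int (min b (q - b))"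
  have QBM: "1 \<le> B" "B + 1 \<le> Q" "1 \<le> M" "M \<le> B" "M \<le> Q - B"
    using b by (simp_all add: Q_def B_def M_def)
  text \<open>The phase increment, shifted by \<open>1\<close> into \<open>(0, 1)\<close>.\<close>
  define \<theta> where "\<theta> m = \<beta> * (2 * real m + 1) - B / Q + 1" for m
  have "norm (\<Sum>m<N. e (\<beta> * (real m)\<^sup>2 - B * real m / Q)) \<le> 1 + 2 / (pi * (M / (2 * Q)))"
  proof (rule kusmin_landau)
    fix m assume "m < N"
    have "\<bar>\<beta> * (2 * real m + 1)\<bar> \<le> \<bar>\<beta>\<bar> * (2 * real N)"
      using \<open>m < N\<close> by (simp add: abs_mult mult_left_mono)
    also have "\<dots> \<le> (1/2) / Q"
      using small QBM by (simp add: field_simps Q_def)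
    finally have "\<bar>\<beta> * (2 * real m + 1)\<bar> \<le> (1/2) / Q" .
    moreover have "M / (2 * Q) \<le> (B - 1/2) / Q"
      using QBM by (simp add: field_simps)
    moreover have "(B + 1/2) / Q + M / (2 * Q) \<le> 1"
    proof -
      have "(B + 1/2) / Q + M / (2 * Q) = (2 * B + 1 + M) / (2 * Q)"
        using QBM by (simp add: field_simps)
      also have "\<dots> \<le> 1"
        using QBM by simp
      finally show ?thesis .
    qed
    ultimately show "M / (2 * Q) \<le> \<theta> m \<and> \<theta> m \<le> 1 - M / (2 * Q)"
      using add_divide_distrib[of B "1/2" Q] diff_divide_distrib[of B "1/2" Q]
      unfolding \<theta>_def abs_le_iff by (smt (verit))
    have "\<beta> * (real (Suc m))\<^sup>2 - B * real (Suc m) / Q - (\<beta> * (real m)\<^sup>2 - B * real m / Q)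
        = \<theta> m + of_int (- 1)"
      using QBM by (simp add: \<theta>_def field_simps power2_eq_square)
    then show "e (\<beta> * (real (Suc m))\<^sup>2 - B * real (Suc m) / Q - (\<beta> * (real m)\<^sup>2 - B * real m / Q)) = e (\<theta> m)"
      by (simp only: e_add_of_int)
  next
    show "(\<forall>m. Suc m < N \<longrightarrow> \<theta> m \<le> \<theta> (Suc m)) \<or> (\<forall>m. Suc m < N \<longrightarrow> \<theta> (Suc m) \<le> \<theta> m)"
      by (cases "0 \<le> \<beta>") (auto simp: \<theta>_def algebra_simps)
  qed (use QBM in simp)
  also have "\<dots> \<le> 1 + 2 * Q / M"
    using QBM pi_gt3 by (simp add: field_simps)
  finally show ?thesis
    by (simp add: Q_def B_def M_def)
qed

lemma norm_sum_e_quadratic_minus_differences_le: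
  fixes \<beta> :: real and N :: nat
  assumes \<beta>: "\<beta> \<noteq> 0" and small: "4 * real N * \<bar>\<beta>\<bar> \<le> 1"
  shows "norm ((\<Sum>m<N. e (\<beta> * (real m)\<^sup>2)) -
     (\<Sum>m<N. (e (\<beta> * (real (Suc m))\<^sup>2) - e (\<beta> * (real m)\<^sup>2))
               / (2 * of_real pi * \<i> * of_real (\<beta> * (2 * real m + 1))))) \<le> 3"
proof (rule norm_sum_e_minus_differences_le)
  fix m assume "m < N"
  show "e (\<beta> * (real (Suc m))\<^sup>2 - \<beta> * (real m)\<^sup>2) = e (\<beta> * (2 * real m + 1))"
    by (simp add: power2_eq_square algebra_simps)
  have "\<bar>\<beta> * (2 * real m + 1)\<bar> \<le> \<bar>\<beta>\<bar> * (2 * real N)"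
    using \<open>m < N\<close> by (simp add: abs_mult mult_left_mono)
  also have "\<dots> \<le> 1 / 2"
    using small by (simp add: algebra_simps)
  finally show "\<bar>\<beta> * (2 * real m + 1)\<bar> \<le> 1 / 2" .
next
  fix j k :: nat
  show "0 < \<beta> * (2 * real j + 1) * (\<beta> * (2 * real k + 1))"
    using \<beta> by (cases "0 < \<beta>") (auto simp: zero_less_mult_iff mult_less_0_iff)
next
  show "(\<forall>m. Suc m < N \<longrightarrow> \<beta> * (2 * real m + 1) \<le> \<beta> * (2 * real (Suc m) + 1)) \<or>
        (\<forall>m. Suc m < N \<longrightarrow> \<beta> * (2 * real (Suc m) + 1) \<le> \<beta> * (2 * real m + 1))"
    by (cases "0 \<le> \<beta>") (auto simp: algebra_simps)
qed

lemma has_integral_e_linear: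
  assumes "t \<noteq> 0" "u \<le> v"
  shows "((\<lambda>x. e (a + t * x)) has_integral
           (e (a + t * v) - e (a + t * u)) / (2 * of_real pi * \<i> * of_real t)) {u..v}"
proof -
  define c where "c = 2 * of_real pi * \<i> * complex_of_real t"
  have "((\<lambda>x. e (a + t * x) / c) has_vector_derivative e (a + t * x)) (at x within {u..v})" for x
  proof -
    have "((\<lambda>z. exp (2 * of_real pi * \<i> * (of_real a + of_real t * z)) / c) has_field_derivative
            exp (2 * of_real pi * \<i> * (of_real a + of_real t * of_real x))) (at (of_real x))"
      using assms(1) by (auto intro!: derivative_eq_intros simp: c_def algebra_simps)
    from has_vector_derivative_real_field[OF this] show ?thesis
      by (simp add: e_def algebra_simps)
  qed
  then have "((\<lambda>x. e (a + t * x)) has_integral (e (a + t * v) / c - e (a + t * u) / c)) {u..v}"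
    by (intro fundamental_theorem_of_calculus[OF assms(2)])
  then show ?thesis
    by (simp add: c_def diff_divide_distrib)
qed

lemma norm_e_quadratic_minus_chord_le:
  fixes \<beta> x :: real and m :: nat
  assumes x: "real m \<le> x" "x \<le> real m + 1"
  shows "norm (e (\<beta> * x\<^sup>2) - e (\<beta> * (real m)\<^sup>2 + \<beta> * (2 * real m + 1) * (x - real m))) \<le> 2 * \<bar>\<beta>\<bar>"
proof -
  define c where "c = \<beta> * (real m)\<^sup>2 + \<beta> * (2 * real m + 1) * (x - real m)"
  define d where "d = \<beta> * (x - real m) * (x - real m - 1)"
  have "\<bar>(x - real m) * (x - real m - 1)\<bar> \<le> 1 / 4"
  proof -
    have "(x - real m) * (x - real m - 1) \<le> 0"
      using x by (simp add: mult_nonneg_nonpos)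
    moreover have "0 \<le> (x - real m - 1/2)\<^sup>2"
      by simp
    ultimately show ?thesis
      by (simp add: power2_eq_square algebra_simps)
  qed
  then have "\<bar>\<beta>\<bar> * \<bar>(x - real m) * (x - real m - 1)\<bar> \<le> \<bar>\<beta>\<bar> * (1 / 4)"
    by (rule mult_left_mono) simp
  then have d: "\<bar>d\<bar> \<le> \<bar>\<beta>\<bar> / 4"
    by (simp add: d_def abs_mult mult.assoc)
  have "\<beta> * x\<^sup>2 = c + d"
    by (simp add: c_def d_def algebra_simps power2_eq_square)
  then have "norm (e (\<beta> * x\<^sup>2) - e c) = norm (e c * (e d - 1))"
    by (simp add: e_add algebra_simps)
  also have "\<dots> \<le> 2 * pi * \<bar>d\<bar>"
    by (simp add: norm_mult norm_e_minus_1_le)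
  also have "\<dots> \<le> 2 * pi * (\<bar>\<beta>\<bar> / 4)"
    using d by simp
  also have "\<dots> \<le> 2 * \<bar>\<beta>\<bar>"
    using mult_right_mono[OF less_imp_le[OF pi_less_4], of "\<bar>\<beta>\<bar>"] by simp
  finally show ?thesis
    unfolding c_def .
qed

lemma norm_integral_e_quadratic_unit_interval_le:
  fixes \<beta> :: real and m :: nat
  assumes "\<beta> \<noteq> 0"
  shows "norm (integral {real m..real m + 1} (\<lambda>x. e (\<beta> * x\<^sup>2)) -
     (e (\<beta> * (real (Suc m))\<^sup>2) - e (\<beta> * (real m)\<^sup>2))
       / (2 * of_real pi * \<i> * of_real (\<beta> * (2 * real m + 1)))) \<le> 2 * \<bar>\<beta>\<bar>"
proof -
  define t where "t = \<beta> * (2 * real m + 1)"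
  define a where "a = \<beta> * (real m)\<^sup>2 - t * real m"
  have "t \<noteq> 0"
    using assms by (simp add: t_def add_pos_pos)
  moreover have "a + t * (real m + 1) = \<beta> * (real (Suc m))\<^sup>2" "a + t * real m = \<beta> * (real m)\<^sup>2"
    by (simp_all add: a_def t_def algebra_simps power2_eq_square)
  ultimately have "((\<lambda>x. e (a + t * x)) has_integral
      (e (\<beta> * (real (Suc m))\<^sup>2) - e (\<beta> * (real m)\<^sup>2)) / (2 * of_real pi * \<i> * of_real t)) {real m..real m + 1}"
    using has_integral_e_linear[of t "real m" "real m + 1" a] by simp
  then have "integral {real m..real m + 1} (\<lambda>x. e (\<beta> * x\<^sup>2) - e (a + t * x))
      = integral {real m..real m + 1} (\<lambda>x. e (\<beta> * x\<^sup>2))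
        - (e (\<beta> * (real (Suc m))\<^sup>2) - e (\<beta> * (real m)\<^sup>2)) / (2 * of_real pi * \<i> * of_real t)"
    by (subst integral_diff) (auto intro!: integrable_continuous_interval continuous_intros
      simp: integral_unique)
  moreover have "norm (integral {real m..real m + 1} (\<lambda>x. e (\<beta> * x\<^sup>2) - e (a + t * x)))
      \<le> 2 * \<bar>\<beta>\<bar> * (real m + 1 - real m)"
  proof (rule integral_bound)
    fix x assume "x \<in> {real m..real m + 1}"
    moreover have "a + t * x = \<beta> * (real m)\<^sup>2 + \<beta> * (2 * real m + 1) * (x - real m)"
      by (simp add: a_def t_def algebra_simps)
    ultimately show "norm (e (\<beta> * x\<^sup>2) - e (a + t * x)) \<le> 2 * \<bar>\<beta>\<bar>"
      using norm_e_quadratic_minus_chord_le[of m x \<beta>] by simp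
  qed (auto intro!: continuous_intros)
  ultimately show ?thesis
    by (simp add: t_def)
qed

lemma integral_eq_sum_unit_intervals:
  fixes f :: "real \<Rightarrow> 'a :: banach"
  assumes "continuous_on {0..real N} f"
  shows "integral {0..real N} f = (\<Sum>m<N. integral {real m..real m + 1} f)"
  using assms
proof (induction N)
  case (Suc N)
  have "integral {0..real N} f + integral {real N..real N + 1} f = integral {0..real N + 1} f"
    using Suc.prems by (intro Henstock_Kurzweil_Integration.integral_combine integrable_continuous_interval)
      (auto simp: add.commute)
  moreover have "continuous_on {0..real N} f"
    using Suc.prems by (rule continuous_on_subset) auto
  ultimately show ?case
    using Suc.IH by (simp add: add.commute)
qed simp

lemma sum_atLeast1_atMost_eq:
  fixes f :: "nat \<Rightarrow> 'a :: ab_group_add"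
  shows "(\<Sum>m=1..N. f m) = (\<Sum>m<N. f m) - f 0 + f N"
  by (induction N) (auto simp: atLeastAtMostSuc_conv)

lemma norm_sum_e_quadratic_minus_integral_le:
  fixes X \<beta> :: real and N :: nat
  assumes X: "0 \<le> X" and N: "N = nat \<lfloor>X\<rfloor>" and small: "4 * real N * \<bar>\<beta>\<bar> \<le> 1"
  shows "norm ((\<Sum>m=1..N. e (\<beta> * (real m)\<^sup>2)) - integral {0..X} (\<lambda>x. e (\<beta> * x\<^sup>2))) \<le> 7"
proof -
  define h where "h m = e (\<beta> * (real m)\<^sup>2)" for m
  define H where "H = (\<lambda>x. e (\<beta> * x\<^sup>2))"
  have NX: "real N \<le> X" "X < real N + 1"
    using X N by linarith+
  have cont_H: "continuous_on U H" for U
    unfolding H_def by (intro continuous_intros)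
  have tail: "norm (integral {real N..X} H) \<le> 1"
    using integral_bound[of "real N" X H 1] NX cont_H by (simp add: H_def)
  have split: "integral {0..X} H = integral {0..real N} H + integral {real N..X} H"
    using NX by (intro Henstock_Kurzweil_Integration.integral_combine[symmetric]
        integrable_continuous_interval cont_H) auto
  have "norm ((\<Sum>m=1..N. h m) - integral {0..X} H) \<le> 7"
  proof (cases "\<beta> = 0")
    case True
    then have "(\<Sum>m=1..N. h m) - integral {0..X} H = of_real (real N - X)"
      using X by (simp add: h_def H_def scaleR_conv_of_real)
    moreover have "norm (complex_of_real (real N - X)) \<le> 7"
      using NX by (simp only: norm_of_real)
    ultimately show ?thesis
      by simp
  next
    case False
    define D where "D m = (e (\<beta> * (real (Suc m))\<^sup>2) - e (\<beta> * (real m)\<^sup>2))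
                          / (2 * of_real pi * \<i> * of_real (\<beta> * (2 * real m + 1)))" for m
    have sum_D: "norm ((\<Sum>m<N. h m) - (\<Sum>m<N. D m)) \<le> 3"
      unfolding h_def D_def using False small by (rule norm_sum_e_quadratic_minus_differences_le)
    have "norm ((\<Sum>m<N. D m) - integral {0..real N} H)
        = norm (\<Sum>m<N. integral {real m..real m + 1} H - D m)"
      by (simp add: integral_eq_sum_unit_intervals cont_H sum_subtractf norm_minus_commute)
    also have "\<dots> \<le> (\<Sum>m<N. 2 * \<bar>\<beta>\<bar>)"
      unfolding H_def D_def
      by (intro sum_norm_le norm_integral_e_quadratic_unit_interval_le False)
    also have "\<dots> \<le> 1 / 2"
      using small by simp
    finally have D_integral: "norm ((\<Sum>m<N. D m) - integral {0..real N} H) \<le> 1 / 2" .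
    have "(\<Sum>m=1..N. h m) - integral {0..X} H
        = ((\<Sum>m<N. h m) - (\<Sum>m<N. D m)) + ((\<Sum>m<N. D m) - integral {0..real N} H)
          - h 0 + h N - integral {real N..X} H"
      unfolding sum_atLeast1_atMost_eq split by simp
    also have "norm \<dots> \<le> 3 + 1 / 2 + 1 + 1 + 1"
      using sum_D D_integral tail norm_triangle_ineq norm_triangle_ineq4
      by (smt (verit) h_def norm_e)
    finally show ?thesis
      by simp
  qed
  then show ?thesis
    by (simp add: h_def H_def)
qed

section \<open>The coefficients \<open>E(b, q, \<beta>)\<close>\<close>

definition major_arc_coeff :: "real \<Rightarrow> real \<Rightarrow> int \<Rightarrow> int \<Rightarrow> complex" where
  "major_arc_coeff X \<beta> q b =
     (if 0 \<le> b \<and> b < q then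
        ((\<Sum>m=1..nat \<lfloor>X\<rfloor>. e (\<beta> * (real m)\<^sup>2 - of_int b * real m / of_int q))
          - (if b = 0 then integral {0..X} (\<lambda>x. e (x\<^sup>2 * \<beta>)) else 0)) / of_int q
      else 0)"

lemma finite_brange [simp]: "finite (brange q)"
proof (rule finite_subset)
  show "brange q \<subseteq> {-2 * \<bar>q\<bar>..2 * \<bar>q\<bar>}"
    by (auto simp: brange_def)
qed simp

lemma sum_brange_eq_sum_residues:
  assumes "1 \<le> q" "\<And>b. b \<in> brange q \<Longrightarrow> \<not> (0 \<le> b \<and> b < q) \<Longrightarrow> f b = 0"
  shows "(\<Sum>b\<in>brange q. f b) = (\<Sum>b\<in>{0..<q}. f b)"
  using assms by (intro sum.mono_neutral_right finite_brange) (auto simp: brange_def)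

lemma weylf_eq_major_arc_expansion:
  fixes q a :: int assumes q: "1 \<le> q" and X: "0 \<le> X"
  shows "weylf X (of_int a / of_int q + \<beta>) =
           S q a 0 / of_int q * integral {0..X} (\<lambda>x. e (x\<^sup>2 * \<beta>))
           + (\<Sum>b\<in>brange q. S q a b * major_arc_coeff X \<beta> q b)"
proof -
  define T where "T b = (\<Sum>m=1..nat \<lfloor>X\<rfloor>. e (\<beta> * (real m)\<^sup>2 - of_int b * real m / of_int q))" for b
  define I where "I = integral {0..X} (\<lambda>x. e (x\<^sup>2 * \<beta>))"
  have "(\<Sum>b\<in>brange q. S q a b * major_arc_coeff X \<beta> q b)
      = (\<Sum>b\<in>{0..<q}. S q a b * T b / of_int q - (if b = 0 then S q a 0 * I / of_int q else 0))"
    using q by (subst sum_brange_eq_sum_residues)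
      (auto simp: major_arc_coeff_def T_def I_def diff_divide_distrib right_diff_distrib intro!: sum.cong)
  also have "\<dots> = (\<Sum>b\<in>{0..<q}. S q a b * T b) / of_int q - S q a 0 * I / of_int q"
    using q by (simp add: sum_subtractf sum_divide_distrib)
  finally show ?thesis
    using weylf_eq_sum_gauss_sums[OF q X, of a \<beta>] by (simp add: T_def I_def)
qed

lemma norm_major_arc_coeff_zero_le:
  assumes X: "0 \<le> X" and q: "1 \<le> q" and small: "4 * of_int q * of_int \<lfloor>X\<rfloor> * \<bar>\<beta>\<bar> \<le> 1"
  shows "norm (major_arc_coeff X \<beta> q 0) \<le> 7"
proof -
  define N where "N = nat \<lfloor>X\<rfloor>"
  have "4 * real N * \<bar>\<beta>\<bar> \<le> 4 * of_int q * of_int \<lfloor>X\<rfloor> * \<bar>\<beta>\<bar>"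
    using X q by (simp add: N_def mult_right_mono)
  then have "norm ((\<Sum>m=1..N. e (\<beta> * (real m)\<^sup>2)) - integral {0..X} (\<lambda>x. e (\<beta> * x\<^sup>2))) \<le> 7"
    using X small by (intro norm_sum_e_quadratic_minus_integral_le) (auto simp: N_def)
  moreover have "norm (major_arc_coeff X \<beta> q 0)
      = norm ((\<Sum>m=1..N. e (\<beta> * (real m)\<^sup>2)) - integral {0..X} (\<lambda>x. e (\<beta> * x\<^sup>2))) / of_int q"
    using q by (simp add: major_arc_coeff_def N_def norm_divide mult.commute)
  ultimately show ?thesis
    using q by (simp add: divide_le_eq)
qed

lemma norm_major_arc_coeff_le:
  assumes X: "0 \<le> X" and b: "1 \<le> b" "b < q"
    and small: "4 * of_int q * of_int \<lfloor>X\<rfloor> * \<bar>\<beta>\<bar> \<le> 1"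
  shows "norm (major_arc_coeff X \<beta> q b) \<le> 4 / of_int (min b (q - b))"
proof -
  define N where "N = nat \<lfloor>X\<rfloor>"
  define h where "h m = e (\<beta> * (real m)\<^sup>2 - of_int b * real m / of_int q)" for m
  define Q M where "Q = real_of_int q" and "M = real_of_int (min b (q - b))"
  have QM: "1 \<le> M" "2 * M \<le> Q"
    using b by (auto simp: Q_def M_def min_def)
  have "4 * of_int q * real N * \<bar>\<beta>\<bar> \<le> 1"
    using small X by (simp add: N_def)
  then have "norm (\<Sum>m<N. h m) \<le> 1 + 2 * Q / M"
    unfolding h_def Q_def M_def using b by (rule norm_sum_e_quadratic_twist_le[rotated 2])
  then have "norm ((\<Sum>m<N. h m) - h 0 + h N) \<le> 3 + 2 * Q / M"
    by (smt (verit) h_def norm_e norm_triangle_ineq norm_triangle_ineq4)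
  also have "\<dots> \<le> 4 * Q / M"
    using QM by (simp add: field_simps)
  finally have "norm (\<Sum>m=1..N. h m) / Q \<le> 4 / M"
    using QM by (subst sum_atLeast1_atMost_eq) (simp add: field_simps)
  then show ?thesis
    using b by (simp add: major_arc_coeff_def N_def h_def Q_def M_def norm_divide)
qed

lemma harm_le_1_plus_ln:
  assumes "1 \<le> n"
  shows "harm n \<le> 1 + ln (real n)"
  using euler_mascheroni_sequence_decreasing[of 1 n] assms by (simp add: harm_expand)

lemma sum_inverse_min_le:
  fixes q :: int assumes q: "1 \<le> q"
  shows "(\<Sum>b\<in>{1..<q}. 1 / real_of_int (min b (q - b))) \<le> 2 * (1 + ln (real_of_int q))"
proof -
  have "(\<Sum>b\<in>{1..<q}. 1 / real_of_int (min b (q - b)))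
      \<le> (\<Sum>b\<in>{1..<q}. 1 / real_of_int b + 1 / real_of_int (q - b))"
    by (intro sum_mono) (auto simp: min_def)
  also have "\<dots> = 2 * (\<Sum>b\<in>{1..<q}. 1 / real_of_int b)"
  proof -
    have "(\<Sum>b\<in>{1..<q}. 1 / real_of_int (q - b)) = (\<Sum>b\<in>{1..<q}. 1 / real_of_int b)"
      by (rule sum.reindex_bij_witness[of _ "\<lambda>b. q - b" "\<lambda>b. q - b"]) auto
    then show ?thesis
      by (simp add: sum.distrib)
  qed
  also have "(\<Sum>b\<in>{1..<q}. 1 / real_of_int b) = harm (nat q - 1)"
  proof -
    have img: "int ` {1..nat q - 1} = {1..<q}"
      using q by (auto simp: image_int_atLeastAtMost of_nat_diff)
    show ?thesis
      by (simp add: harm_def sum.reindex inverse_eq_divide flip: img)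
  qed
  also have "harm (nat q - 1) \<le> 1 + ln (real_of_int q)"
  proof (cases "q = 1")
    case False
    then have "harm (nat q - 1) \<le> 1 + ln (real (nat q - 1))"
      using q by (intro harm_le_1_plus_ln) simp
    also have "\<dots> \<le> 1 + ln (real_of_int q)"
      using q False by simp
    finally show ?thesis .
  qed (simp add: harm_expand)
  finally show ?thesis
    by simp
qed

lemma sum_norm_major_arc_coeff_le:
  assumes X: "0 \<le> X" and q: "1 \<le> q" and small: "4 * of_int q * of_int \<lfloor>X\<rfloor> * \<bar>\<beta>\<bar> \<le> 1"
  shows "(\<Sum>b\<in>brange q. norm (major_arc_coeff X \<beta> q b)) \<le> 23 * ln (of_int q + 2)"
proof -
  have "{0..<q} = insert 0 {1..<q}"
    using q by auto
  then have "(\<Sum>b\<in>brange q. norm (major_arc_coeff X \<beta> q b))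
      = norm (major_arc_coeff X \<beta> q 0) + (\<Sum>b\<in>{1..<q}. norm (major_arc_coeff X \<beta> q b))"
    using q by (subst sum_brange_eq_sum_residues) (auto simp: major_arc_coeff_def)
  also have "\<dots> \<le> 7 + (\<Sum>b\<in>{1..<q}. 4 * (1 / of_int (min b (q - b))))"
    using norm_major_arc_coeff_zero_le[OF X q small] norm_major_arc_coeff_le[OF X _ _ small]
    by (intro add_mono sum_mono) auto
  also have "\<dots> = 7 + 4 * (\<Sum>b\<in>{1..<q}. 1 / of_int (min b (q - b)))"
    by (simp add: sum_distrib_left)
  also have "\<dots> \<le> 7 + 4 * (2 * (1 + ln (of_int q)))"
    using sum_inverse_min_le[OF q] by linarith
  also have "\<dots> \<le> 23 * ln (of_int q + 2)"
  proof -
    have "ln (real_of_int q) \<le> ln (real_of_int q + 2)"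
      using q by simp
    moreover have "1 \<le> ln (real_of_int q + 2)"
      using q exp_le by (subst ln_ge_iff) auto
    ultimately show ?thesis
      by argo
  qed
  finally show ?thesis .
qed

lemma major_arc_width_le:
  fixes X \<beta> :: real and q :: int
  assumes "0 \<le> X" "1 \<le> q" "q \<le> \<lfloor>5 * X\<rfloor>" "\<bar>\<beta>\<bar> \<le> 1 / (of_int q * of_int \<lfloor>5 * X\<rfloor>)"
  shows "4 * of_int q * of_int \<lfloor>X\<rfloor> * \<bar>\<beta>\<bar> \<le> 1"
proof -
  have "4 * \<lfloor>X\<rfloor> \<le> \<lfloor>5 * X\<rfloor>" "0 < \<lfloor>5 * X\<rfloor>"
    using assms(1-3) by linarith+
  then have "4 * q * \<lfloor>X\<rfloor> \<le> q * \<lfloor>5 * X\<rfloor>" "0 < q * \<lfloor>5 * X\<rfloor>"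
    using assms(2) mult_left_mono[of "4 * \<lfloor>X\<rfloor>" "\<lfloor>5 * X\<rfloor>" q] by (simp_all add: ac_simps)
  then have le: "real_of_int (4 * q * \<lfloor>X\<rfloor>) \<le> real_of_int (q * \<lfloor>5 * X\<rfloor>)"
    and pos: "0 < real_of_int (q * \<lfloor>5 * X\<rfloor>)"
    by (simp_all only: of_int_le_iff of_int_0_less_iff)
  have "4 * of_int q * of_int \<lfloor>X\<rfloor> * \<bar>\<beta>\<bar> \<le> real_of_int (q * \<lfloor>5 * X\<rfloor>) * \<bar>\<beta>\<bar>"
    using le by (intro mult_right_mono) simp_all
  also have "\<dots> \<le> 1"
    using assms(4) pos by (simp add: le_divide_eq mult.commute)
  finally show ?thesis .
qed

theorem lemma4p1:
  shows "\<exists>C X0. \<forall>X::real. X \<ge> X0 \<longrightarrow>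
    (\<forall>(q::int) (\<beta>::real). 1 \<le> q \<and> q \<le> \<lfloor>5 * X\<rfloor> \<and>
        \<bar>\<beta>\<bar> \<le> 1 / (of_int q * of_int \<lfloor>5 * X\<rfloor>) \<longrightarrow>
      (\<exists>E :: int \<Rightarrow> complex.
         (\<Sum>b\<in>brange q. norm (E b)) \<le> C * ln (of_int q + 2) \<and>
         (\<forall>a::int. coprime a q \<longrightarrow>
            weylf X (of_int a / of_int q + \<beta>) =
              S q a 0 / of_int q * integral {0..X} (\<lambda>x. e (x^2 * \<beta>))
              + (\<Sum>b\<in>brange q. S q a b * E b))))"
proof (rule exI[of _ 23], rule exI[of _ 0], intro allI impI)
  fix X \<beta> :: real and q :: int
  assume X: "0 \<le> X"
    and hyp: "1 \<le> q \<and> q \<le> \<lfloor>5 * X\<rfloor> \<and> \<bar>\<beta>\<bar> \<le> 1 / (of_int q * of_int \<lfloor>5 * X\<rfloor>)"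
  then have q: "1 \<le> q" and small: "4 * of_int q * of_int \<lfloor>X\<rfloor> * \<bar>\<beta>\<bar> \<le> 1"
    using major_arc_width_le by auto
  show "\<exists>E. (\<Sum>b\<in>brange q. norm (E b)) \<le> 23 * ln (of_int q + 2) \<and>
         (\<forall>a. coprime a q \<longrightarrow> weylf X (of_int a / of_int q + \<beta>) =
            S q a 0 / of_int q * integral {0..X} (\<lambda>x. e (x^2 * \<beta>)) + (\<Sum>b\<in>brange q. S q a b * E b))"
    using sum_norm_major_arc_coeff_le[OF X q small] weylf_eq_major_arc_expansion[OF q X]
    by blast
qed

end
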